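(* Let $R$ be a valuation domain of cardinality $\aleph_1$, $J/R$ a type with $J=\bigcup_{\sigma<\omega_1} r_\sigma^{-1}R$ as in the context, and $U$ a uniserial $R$-module of type $J/R$. If $U$ has a special family of functions, then $U$ is non-standard.
   Context: A valuation domain is an integral domain whose ideals are linearly ordered; $Q$ is its quotient field ($Q\neq R$). A module is uniserial if its submodules are linearly ordered by inclusion. A uniserial $R$-module is standard if it is isomorphic to $J'/A$ for $R$-submodules $A\subseteq J'$ of $Q$, and non-standard otherwise. For a uniserial $U$ and $0\neq a\in U$, let $\mathrm{Ann}(a)=\{r\in R: ra=0\}$ and $D(a)=\bigcup\{r^{-1}R: a\in rU\}$; $U$ has type $J/A$ if $J/A\cong D(a)/\mathrm{Ann}(a)$ (independent of $a$). A type $J/R$: $J$ is an $R$-submodule of $Q$ with $R\subseteq J$, written $J=\bigcup_{\sigma<\omega_1} r_\sigma^{-1}R$ with nonzero $r_\sigma\in R$ such that $r_\tau\mid r_\sigma$ for $\tau<\sigma$. Special family: for $U$ of type $J/R$, fix for each $\sigma<\omega_1$ an element $a_\sigma\in U$ with $\mathrm{Ann}(a_\sigma)=r_\sigma R$, and let $I_\sigma$ be the set of all $R$-module isomorphisms $a_\sigma R\to r_\sigma^{-1}R/R$. A family $\{f_\sigma:\sigma<\omega_1\}$ of functions $f_\sigma: I_\sigma\to\mathbb{Q}$ is a special family of functions for $U$ if whenever $\sigma<\rho$, $\varphi\in I_\rho$, $\psi\in I_\sigma$ and $\varphi$ extends $\psi$ (note $a_\sigma R\subseteq a_\rho R$ and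 $r_\sigma^{-1}R/R\subseteq r_\rho^{-1}R/R$), then $f_\sigma(\psi)<f_\rho(\varphi)$. $U$ is called explicitly non-standard if it has a special family of functions. *)

theory Defs
  imports Complex_Main HOL.Modules "HOL-Computational_Algebra.Fraction_Field" "HOL-Library.FuncSet"
begin

text \<open>R is modelled by a type 'r of class idom (integral domain); its quotient
field Q is the type 'r fract. R is embedded into Q via x maps to Fract x 1.\<close>

definition emb :: "'r::idom \<Rightarrow> 'r fract" where
  "emb x = Fract x 1"

definition Rq :: "'r::idom fract set" where
  "Rq = range emb"

definition ring_ideal :: "'r::idom set \<Rightarrow> bool" where
  "ring_ideal I \<longleftrightarrow> 0 \<in> I \<and> (\<forall>x\<in>I. \<forall>y\<in>I. x + y \<in> I) \<and> (\<forall>c. \<forall>x\<in>I. c * x \<in> I)"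

definition valuation_domain :: "'r::idom itself \<Rightarrow> bool" where
  "valuation_domain _ \<longleftrightarrow>
     (\<forall>I J :: 'r set. ring_ideal I \<and> ring_ideal J \<longrightarrow> I \<subseteq> J \<or> J \<subseteq> I)
   \<and> (Rq :: 'r fract set) \<noteq> UNIV"

definition principal :: "'r::idom \<Rightarrow> 'r set" where
  "principal r = {r * x | x. True}"

definition rinv :: "'r::idom \<Rightarrow> 'r fract set" where
  "rinv r = {Fract x r | x. True}"

definition qsub :: "'r::idom fract set \<Rightarrow> bool" where
  "qsub M \<longleftrightarrow> 0 \<in> M \<and> (\<forall>x\<in>M. \<forall>y\<in>M. x + y \<in> M) \<and> (\<forall>c. \<forall>x\<in>M. emb c * x \<in> M)"

definition qscale :: "'r::idom \<Rightarrow> 'r fract \<Rightarrow> 'r fract" where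
  "qscale c q = emb c * q"

definition coset :: "'r::idom fract set \<Rightarrow> 'r fract \<Rightarrow> 'r fract set" where
  "coset B y = (\<lambda>b. y + b) ` B"

text \<open>phi is an R-module homomorphism from the module (S, +, sc) into the
subquotient T/B of Q (elements of T/B are represented as cosets of B).\<close>
definition quot_hom ::
  "'x::plus set \<Rightarrow> ('r::idom \<Rightarrow> 'x \<Rightarrow> 'x) \<Rightarrow> 'r fract set \<Rightarrow> 'r fract set \<Rightarrow> ('x \<Rightarrow> 'r fract set) \<Rightarrow> bool" where
  "quot_hom S sc T B phi \<longleftrightarrow>
     (\<forall>x\<in>S. \<exists>y\<in>T. phi x = coset B y)
   \<and> (\<forall>x\<in>S. \<forall>x'\<in>S. \<forall>y y'. phi x = coset B y \<longrightarrow> phi x' = coset B y' \<longrightarrow> phi (x + x') = coset B (y + y'))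
   \<and> (\<forall>c. \<forall>x\<in>S. \<forall>y. phi x = coset B y \<longrightarrow> phi (sc c x) = coset B (emb c * y))"

text \<open>Isomorphism of subquotients J1/A1 and J2/A2 of Q (via the first isomorphism theorem:
a surjective homomorphism J1 onto J2/A2 with kernel A1).\<close>
definition qiso :: "'r::idom fract set \<Rightarrow> 'r fract set \<Rightarrow> 'r fract set \<Rightarrow> 'r fract set \<Rightarrow> bool" where
  "qiso J1 A1 J2 A2 \<longleftrightarrow> qsub J1 \<and> qsub A1 \<and> A1 \<subseteq> J1 \<and> qsub J2 \<and> qsub A2 \<and> A2 \<subseteq> J2 \<and>
     (\<exists>g. quot_hom J1 qscale J2 A2 g \<and> {x\<in>J1. g x = A2} = A1 \<and> (\<forall>y\<in>J2. \<exists>x\<in>J1. g x = coset A2 y))"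

text \<open>Uniserial module: submodules linearly ordered by inclusion. The module U is the
whole type 'm with scalar multiplication scale.\<close>
definition uniserial :: "('r::comm_ring_1 \<Rightarrow> 'm::ab_group_add \<Rightarrow> 'm) \<Rightarrow> bool" where
  "uniserial scale \<longleftrightarrow>
     (\<forall>A B. module.subspace scale A \<and> module.subspace scale B \<longrightarrow> A \<subseteq> B \<or> B \<subseteq> A)"

definition Ann :: "('r::idom \<Rightarrow> 'm::ab_group_add \<Rightarrow> 'm) \<Rightarrow> 'm \<Rightarrow> 'r set" where
  "Ann scale a = {r. scale r a = 0}"

definition Dset :: "('r::idom \<Rightarrow> 'm::ab_group_add \<Rightarrow> 'm) \<Rightarrow> 'm \<Rightarrow> 'r fract set" where
  "Dset scale a = \<Union> {rinv r | r. r \<noteq> 0 \<and> a \<in> range (scale r)}"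

definition cyc :: "('r::idom \<Rightarrow> 'm::ab_group_add \<Rightarrow> 'm) \<Rightarrow> 'm \<Rightarrow> 'm set" where
  "cyc scale a = range (\<lambda>r. scale r a)"

text \<open>U has type J/A: J/A is isomorphic to D(a)/Ann(a) (for a nonzero a; independent of a).\<close>
definition has_type :: "('r::idom \<Rightarrow> 'm::ab_group_add \<Rightarrow> 'm) \<Rightarrow> 'r fract set \<Rightarrow> 'r fract set \<Rightarrow> bool" where
  "has_type scale J A \<longleftrightarrow> (\<exists>a. a \<noteq> 0 \<and> qiso J A (Dset scale a) (emb ` Ann scale a))"

text \<open>Standard: U is isomorphic to J'/A for submodules A of J' of Q, i.e. there is a surjective
R-homomorphism J' onto U with kernel A.\<close>
definition standard :: "('r::idom \<Rightarrow> 'm::ab_group_add \<Rightarrow> 'm) \<Rightarrow> bool" where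
  "standard scale \<longleftrightarrow> (\<exists>J' A (g :: 'r fract \<Rightarrow> 'm). qsub J' \<and> qsub A \<and> A \<subseteq> J' \<and>
     (\<forall>x\<in>J'. \<forall>y\<in>J'. g (x + y) = g x + g y) \<and>
     (\<forall>c. \<forall>x\<in>J'. g (emb c * x) = scale c (g x)) \<and>
     g ` J' = UNIV \<and> {x\<in>J'. g x = 0} = A)"

text \<open>omega_1, realised as the successor cardinal of aleph_0 (an initial-ordinal well-order).\<close>
abbreviation omega1 :: "nat set rel" where
  "omega1 \<equiv> cardSuc natLeq"

text \<open>I_sigma: R-module isomorphisms from a_sigma R onto r_sigma^{-1}R/R (as extensional functions).\<close>
definition Iso_set :: "('r::idom \<Rightarrow> 'm::ab_group_add \<Rightarrow> 'm) \<Rightarrow> 'm \<Rightarrow> 'r \<Rightarrow> ('m \<Rightarrow> 'r fract set) set" where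
  "Iso_set scale a r = {phi. phi \<in> extensional (cyc scale a) \<and>
      quot_hom (cyc scale a) scale (rinv r) Rq phi \<and> inj_on phi (cyc scale a) \<and>
      (\<forall>y\<in>rinv r. \<exists>x\<in>cyc scale a. phi x = coset Rq y)}"

definition special_family ::
  "('r::idom \<Rightarrow> 'm::ab_group_add \<Rightarrow> 'm) \<Rightarrow> (nat set \<Rightarrow> 'r) \<Rightarrow> (nat set \<Rightarrow> 'm)
     \<Rightarrow> (nat set \<Rightarrow> ('m \<Rightarrow> 'r fract set) \<Rightarrow> rat) \<Rightarrow> bool" where
  "special_family scale rs a f \<longleftrightarrow>
     (\<forall>\<sigma>\<in>Field omega1. \<forall>\<rho>\<in>Field omega1. (\<sigma>, \<rho>) \<in> omega1 \<and> \<sigma> \<noteq> \<rho> \<longrightarrow>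
        (\<forall>phi\<in>Iso_set scale (a \<rho>) (rs \<rho>). \<forall>psi\<in>Iso_set scale (a \<sigma>) (rs \<sigma>).
           (\<forall>x\<in>cyc scale (a \<sigma>). phi x = psi x) \<longrightarrow> f \<sigma> psi < f \<rho> phi))"

end

theory Submission
  imports Defs "HOL-Library.Countable_Set_Type"
begin

(* Suppose U is standard, via a surjection g : J' -> U with kernel A, and pick q with g q = a_sigma
   nonzero. In a valuation domain every x in J' is an R-multiple of q or divides it, so
   Ann(a_sigma) = r_sigma R forces A = r_sigma q R, and u |-> g^-1(u) / (r_sigma q) + R is an
   R-linear embedding of U into Q/R. Restricting this single embedding to the chain of cyclic
   submodules a_sigma R (a chain because U is uniserial) yields phi_sigma in I_sigma with phi_rho
   extending phi_sigma for sigma < rho. A special family then makes sigma |-> f_sigma(phi_sigma) a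
   strictly increasing, hence injective, map from omega_1 into the countable set of rationals. *)

lemma emb_simps [simp]:
  "emb a + emb b = emb (a + b)" "emb a - emb b = emb (a - b)" "- emb a = emb (- a)"
  "emb a * emb b = emb (a * b)" "emb 0 = 0" "emb 1 = 1"
  by (simp_all add: emb_def Zero_fract_def One_fract_def)

lemma emb_eq_iff [simp]: "emb a = emb b \<longleftrightarrow> a = b"
  by (simp add: emb_def eq_fract)

lemma emb_in_Rq [simp]: "emb t \<in> Rq"
  by (simp add: Rq_def)

lemma Rq_iff: "x \<in> Rq \<longleftrightarrow> (\<exists>t. x = emb t)"
  by (auto simp: Rq_def)

lemma qsub_Rq: "qsub Rq"
  unfolding qsub_def Rq_def by (auto intro: range_eqI[of _ _ 0])

lemma qsub_add: "qsub B \<Longrightarrow> x \<in> B \<Longrightarrow> y \<in> B \<Longrightarrow> x + y \<in> B"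
  unfolding qsub_def by blast

lemma qsub_scale: "qsub B \<Longrightarrow> x \<in> B \<Longrightarrow> emb c * x \<in> B"
  unfolding qsub_def by blast

lemma qsub_diff: "qsub B \<Longrightarrow> x \<in> B \<Longrightarrow> y \<in> B \<Longrightarrow> x - y \<in> B"
  using qsub_add[of B x "emb (- 1) * y"] qsub_scale[of B y "- 1"] by (simp flip: emb_simps(3))

lemma coset_eq_iff:
  assumes B: "qsub B"
  shows "coset B y = coset B y' \<longleftrightarrow> y - y' \<in> B"
proof
  assume "coset B y = coset B y'"
  moreover have "y \<in> coset B y"
    using B unfolding coset_def qsub_def by force
  ultimately obtain b where "b \<in> B" "y = y' + b"
    unfolding coset_def by auto
  then show "y - y' \<in> B" by simp
next
  assume yy': "y - y' \<in> B"
  have "y + b \<in> coset B y'" "y' + b \<in> coset B y" if b: "b \<in> B" for b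
  proof -
    have "y - y' + b \<in> B" "b - (y - y') \<in> B"
      using qsub_add[OF B yy' b] qsub_diff[OF B b yy'] by simp_all
    then show "y + b \<in> coset B y'" "y' + b \<in> coset B y"
      unfolding coset_def by (force simp: algebra_simps)+
  qed
  then show "coset B y = coset B y'"
    unfolding coset_def by blast
qed

lemma coset_eq_self_iff: "qsub B \<Longrightarrow> coset B y = B \<longleftrightarrow> y \<in> B"
  using coset_eq_iff[of B y 0] by (simp add: coset_def)

lemma Fract_in_Rq_iff:
  assumes "(r::'r::idom) \<noteq> 0"
  shows "Fract m r \<in> Rq \<longleftrightarrow> r dvd m"
  using assms by (auto simp: Rq_iff emb_def eq_fract dvd_def mult.commute)

lemma principal_iff: "t \<in> principal r \<longleftrightarrow> r dvd t"
  by (auto simp: principal_def dvd_def)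

lemma ring_ideal_principal: "ring_ideal (principal r)"
  unfolding ring_ideal_def by (auto simp: principal_iff)

lemma valuation_domain_dvd_total:
  assumes "valuation_domain TYPE('r::idom)"
  shows "(a::'r) dvd b \<or> b dvd a"
proof -
  have "principal a \<subseteq> principal b \<or> principal b \<subseteq> principal a"
    using assms ring_ideal_principal unfolding valuation_domain_def by blast
  then show ?thesis
    unfolding subset_iff principal_iff by (meson dvd_refl)
qed

lemma valuation_domain_fract_dvd_total:
  assumes "valuation_domain TYPE('r::idom)"
  shows "(\<exists>t. x = emb t * q) \<or> (\<exists>t. q = emb t * (x :: 'r fract))"
proof -
  obtain a b where x: "x = Fract a b" "b \<noteq> 0" by (cases x)
  obtain c d where q: "q = Fract c d" "d \<noteq> 0" by (cases q)
  from valuation_domain_dvd_total[OF assms, of "b * c" "a * d"] show ?thesis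
  proof
    assume "b * c dvd a * d"
    then obtain t where "a * d = b * c * t" by (auto simp: dvd_def)
    then have "x = emb t * q" using x q by (simp add: emb_def eq_fract algebra_simps)
    then show ?thesis by blast
  next
    assume "a * d dvd b * c"
    then obtain t where "b * c = a * d * t" by (auto simp: dvd_def)
    then have "q = emb t * x" using x q by (simp add: emb_def eq_fract algebra_simps)
    then show ?thesis by blast
  qed
qed

lemma rinv_generator:
  assumes v: "valuation_domain TYPE('r::idom)" and r: "(r::'r) \<noteq> 0"
    and z: "\<And>t. z * emb t \<in> Rq \<longleftrightarrow> r dvd t"
  shows "z \<in> rinv r" and "y \<in> rinv r \<Longrightarrow> \<exists>t. z * emb t - y \<in> Rq"
proof -
  obtain w where w: "z * emb r = emb w"
    using z[of r] by (auto simp: Rq_iff)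
  have "emb r \<noteq> 0"
    using r emb_eq_iff[of r 0] by simp
  then have "z = emb w / emb r"
    using w by (simp add: eq_divide_eq)
  then have zw: "z = Fract w r"
    by (simp add: emb_def)
  then show "z \<in> rinv r"
    by (auto simp: rinv_def)
  have w_coprime: "r dvd w * t \<longleftrightarrow> r dvd t" for t
    using z[of t] r by (simp add: zw emb_def Fract_in_Rq_iff)
  have "\<exists>k. r dvd w * k - 1"
  proof (cases "r dvd w")
    case True
    then have "r dvd 1" using w_coprime[of 1] by simp
    then show ?thesis by (meson dvd_trans one_dvd)
  next
    case False
    then have "w dvd r"
      using valuation_domain_dvd_total[OF v] by blast
    then obtain v where v: "r = w * v" ..
    then obtain k where "v = r * k"
      using w_coprime[of v] by (auto simp: dvd_def)
    then have "w * k = 1"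
      using v r by (metis mult.assoc mult.commute mult_cancel_left1)
    then have "r dvd w * k - 1" by simp
    then show ?thesis ..
  qed
  then obtain k where k: "r dvd w * k - 1" ..
  assume "y \<in> rinv r"
  then obtain x where y: "y = Fract x r" by (auto simp: rinv_def)
  have "z * emb (x * k) - y = Fract (x * (w * k - 1)) r"
    using r by (simp add: zw y emb_def eq_fract algebra_simps)
  also have "\<dots> \<in> Rq"
    using r k by (simp add: Fract_in_Rq_iff)
  finally show "\<exists>t. z * emb t - y \<in> Rq" ..
qed

lemma Ann_eq_principal_iff:
  "Ann scale a = principal r \<Longrightarrow> scale t a = 0 \<longleftrightarrow> r dvd t"
  by (auto simp: Ann_def principal_iff set_eq_iff)

lemma scale_in_cyc [simp]: "scale t a \<in> cyc scale a"
  by (simp add: cyc_def)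

lemma self_in_cyc:
  "module scale \<Longrightarrow> a \<in> cyc scale a"
  using scale_in_cyc[of scale 1 a] by (simp add: module.scale_one)

lemma cyc_subset:
  assumes "module scale" and "b \<in> cyc scale a"
  shows "cyc scale b \<subseteq> cyc scale a"
  using assms by (auto simp: cyc_def module.scale_scale)

lemma subspace_cyc:
  assumes "module scale"
  shows "module.subspace scale (cyc scale a)"
proof (rule module.subspaceI[OF assms])
  show "0 \<in> cyc scale a"
    using scale_in_cyc[of scale 0 a] by (simp add: module.scale_zero_left[OF assms])
  show "x + y \<in> cyc scale a" if "x \<in> cyc scale a" "y \<in> cyc scale a" for x y
    using that by (auto simp: cyc_def module.scale_left_distrib[OF assms, symmetric])
  show "scale c x \<in> cyc scale a" if "x \<in> cyc scale a" for c x
    using that by (auto simp: cyc_def module.scale_scale[OF assms])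
qed

lemma uniserial_cyc_subset:
  fixes scale :: "'r::idom \<Rightarrow> 'm::ab_group_add \<Rightarrow> 'm"
  assumes m: "module scale" and v: "valuation_domain TYPE('r)" and u: "uniserial scale"
    and r: "r \<noteq> 0" and r_dvd: "r dvd r'"
    and ann: "Ann scale a = principal r" and ann': "Ann scale a' = principal r'"
  shows "cyc scale a \<subseteq> cyc scale a'"
proof -
  have "cyc scale a \<subseteq> cyc scale a' \<or> cyc scale a' \<subseteq> cyc scale a"
    using u subspace_cyc[OF m] unfolding uniserial_def by blast
  moreover have "a \<in> cyc scale a'" if "cyc scale a' \<subseteq> cyc scale a"
  proof -
    have "a' \<in> cyc scale a"
      using that self_in_cyc[OF m] by blast
    then obtain s where s: "a' = scale s a"
      by (auto simp: cyc_def)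
    from valuation_domain_dvd_total[OF v, of r s] show ?thesis
    proof
      assume "r dvd s"
      then have "a' = 0"
        using s Ann_eq_principal_iff[OF ann] by simp
      then have "r dvd 1"
        using Ann_eq_principal_iff[OF ann', of 1] r_dvd dvd_trans
        by (auto simp: module.scale_one[OF m])
      then have "a = 0"
        using Ann_eq_principal_iff[OF ann, of 1] by (simp add: module.scale_one[OF m])
      then show ?thesis
        using scale_in_cyc[of scale 0 a'] by (simp add: module.scale_zero_left[OF m])
    next
      assume "s dvd r"
      then obtain t where t: "r = s * t" ..
      have "scale t a' = 0"
        using s t Ann_eq_principal_iff[OF ann, of "t * s"] by (simp add: module.scale_scale[OF m])
      then have "r dvd t"
        using Ann_eq_principal_iff[OF ann'] r_dvd dvd_trans by blast
      then obtain k where "t = r * k" ..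
      then have "k * s = 1"
        using t r by (metis mult.assoc mult.commute mult_cancel_left1)
      then have "a = scale k a'"
        using s by (simp add: module.scale_scale[OF m] module.scale_one[OF m])
      then show ?thesis by simp
    qed
  qed
  ultimately show ?thesis
    using cyc_subset[OF m] by blast
qed

lemma quot_hom_restrict:
  assumes m: "module scale" and hom: "quot_hom UNIV scale UNIV B \<Phi>"
    and S: "module.subspace scale S" and T: "\<forall>x\<in>S. \<exists>y\<in>T. \<Phi> x = coset B y"
  shows "quot_hom S scale T B (restrict \<Phi> S)"
  using hom T module.subspace_add[OF m S] module.subspace_scale[OF m S]
  unfolding quot_hom_def by simp

lemma quot_homD:
  assumes hom: "quot_hom S sc T B \<Phi>" and x: "x \<in> S"
  shows "\<exists>y\<in>T. \<Phi> x = coset B y"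
    and "\<Phi> x = coset B y \<Longrightarrow> \<Phi> (sc c x) = coset B (emb c * y)"
  using hom[unfolded quot_hom_def] x by blast+

(* quot_hom UNIV scale UNIV Rq \<Phi> says that \<Phi> is an R-linear map from U to Q/R. *)
lemma restrict_in_Iso_set:
  fixes scale :: "'r::idom \<Rightarrow> 'm::ab_group_add \<Rightarrow> 'm"
  assumes m: "module scale" and v: "valuation_domain TYPE('r)"
    and r: "r \<noteq> 0" and ann: "Ann scale a = principal r"
    and hom: "quot_hom UNIV scale UNIV Rq \<Phi>" and inj: "inj_on \<Phi> (cyc scale a)"
  shows "restrict \<Phi> (cyc scale a) \<in> Iso_set scale a r"
proof -
  obtain z where z: "\<Phi> a = coset Rq z"
    using quot_homD(1)[OF hom] by blast
  have \<Phi>_scale: "\<Phi> (scale t a) = coset Rq (z * emb t)" for t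
    using quot_homD(2)[OF hom UNIV_I z] by (simp add: mult.commute)
  have order: "z * emb t \<in> Rq \<longleftrightarrow> r dvd t" for t
  proof -
    have "z * emb t \<in> Rq \<longleftrightarrow> \<Phi> (scale t a) = \<Phi> (scale 0 a)"
      by (simp add: \<Phi>_scale coset_eq_iff[OF qsub_Rq])
    also have "\<dots> \<longleftrightarrow> scale t a = scale 0 a"
      using inj by (simp add: inj_on_eq_iff)
    also have "\<dots> \<longleftrightarrow> r dvd t"
      using Ann_eq_principal_iff[OF ann] by (simp add: module.scale_zero_left[OF m])
    finally show ?thesis .
  qed
  note generator = rinv_generator[OF v r order]
  have "z * emb t \<in> rinv r" for t
    using generator(1) by (auto simp: rinv_def emb_def)
  then have cyc_values: "\<forall>x\<in>cyc scale a. \<exists>y\<in>rinv r. \<Phi> x = coset Rq y"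
    by (auto simp: cyc_def \<Phi>_scale)
  have "\<exists>x\<in>cyc scale a. restrict \<Phi> (cyc scale a) x = coset Rq y" if y: "y \<in> rinv r" for y
  proof -
    obtain t where "z * emb t - y \<in> Rq"
      using generator(2)[OF y] by blast
    then have "\<Phi> (scale t a) = coset Rq y"
      by (simp add: \<Phi>_scale coset_eq_iff[OF qsub_Rq])
    then show ?thesis
      using scale_in_cyc by fastforce
  qed
  then show ?thesis
    using quot_hom_restrict[OF m hom subspace_cyc[OF m] cyc_values] inj
    unfolding Iso_set_def by simp
qed

lemma fract_hom_kernel_principal:
  fixes scale :: "'r::idom \<Rightarrow> 'm::ab_group_add \<Rightarrow> 'm" and g :: "'r fract \<Rightarrow> 'm"
  assumes m: "module scale" and v: "valuation_domain TYPE('r)"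
    and g_scale: "\<forall>c. \<forall>x\<in>J. g (emb c * x) = scale c (g x)"
    and q: "q \<in> J" and gq: "g q \<noteq> 0" and r: "r \<noteq> 0" and ann: "Ann scale (g q) = principal r"
    and x: "x \<in> J"
  shows "g x = 0 \<longleftrightarrow> x / (emb r * q) \<in> Rq"
proof -
  have "g 0 = 0"
    using g_scale q by (metis emb_simps(5) mult_zero_left module.scale_zero_left[OF m])
  then have "q \<noteq> 0"
    using gq by blast
  then have d: "emb r * q \<noteq> 0"
    using r emb_eq_iff[of r 0] by simp
  have "x / (emb r * q) \<in> Rq \<longleftrightarrow> (\<exists>k. x = emb (k * r) * q)"
    using d by (auto simp: Rq_iff nonzero_divide_eq_eq mult.assoc[symmetric])
  also have "\<dots> \<longleftrightarrow> g x = 0"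
  proof
    assume "\<exists>k. x = emb (k * r) * q"
    then obtain k where "x = emb (k * r) * q" ..
    then have "g x = scale k (scale r (g q))"
      using g_scale q by (simp add: module.scale_scale[OF m])
    then show "g x = 0"
      using Ann_eq_principal_iff[OF ann, of r] by (simp add: module.scale_zero_right[OF m])
  next
    assume gx: "g x = 0"
    consider (multiple) t where "x = emb t * q" | (divisor) t where "q = emb t * x"
      using valuation_domain_fract_dvd_total[OF v] by blast
    then show "\<exists>k. x = emb (k * r) * q"
    proof cases
      case (multiple t)
      then have "scale t (g q) = 0"
        using gx g_scale q by simp
      then obtain k where "t = r * k"
        using Ann_eq_principal_iff[OF ann] by (auto simp: dvd_def)
      then show ?thesis
        using multiple by (metis mult.commute)
    next
      case divisor
      then have "g q = 0"
        using gx g_scale x by (simp add: module.scale_zero_right[OF m])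
      with gq show ?thesis ..
    qed
  qed
  finally show ?thesis ..
qed

lemma inj_quot_hom_of_principal_kernel:
  fixes scale :: "'r::idom \<Rightarrow> 'm::ab_group_add \<Rightarrow> 'm" and g :: "'r fract \<Rightarrow> 'm"
  assumes m: "module scale" and J: "qsub J"
    and g_add: "\<forall>x\<in>J. \<forall>y\<in>J. g (x + y) = g x + g y"
    and g_scale: "\<forall>c. \<forall>x\<in>J. g (emb c * x) = scale c (g x)"
    and surj: "g ` J = UNIV" and ker: "\<forall>x\<in>J. g x = 0 \<longleftrightarrow> x / d \<in> Rq"
  shows "\<exists>\<Phi>. quot_hom UNIV scale UNIV Rq \<Phi> \<and> inj \<Phi>"
proof -
  define pre where "pre = inv_into J g"
  have pre: "pre u \<in> J" "g (pre u) = u" for u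
    using surj by (auto simp: pre_def inv_into_into f_inv_into_f)
  have g_diff: "g (x - y) = g x - g y" if "x \<in> J" "y \<in> J" for x y
  proof -
    have "g (x - y) = g (x + emb (- 1) * y)"
      by (simp flip: emb_simps(3))
    also have "\<dots> = g x - g y"
      using that g_add g_scale qsub_scale[OF J]
      by (simp add: module.scale_minus_left[OF m] module.scale_one[OF m])
    finally show ?thesis .
  qed
  define \<Phi> where "\<Phi> u = coset Rq (pre u / d)" for u
  have \<Phi>_eq_iff: "\<Phi> u = coset Rq y \<longleftrightarrow> pre u / d - y \<in> Rq" for u y
    by (simp add: \<Phi>_def coset_eq_iff[OF qsub_Rq])
  have \<Phi>_g: "\<Phi> (g x) = coset Rq (x / d)" if "x \<in> J" for x
  proof -
    have "pre (g x) - x \<in> J" "g (pre (g x) - x) = 0"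
      using g_diff qsub_diff[OF J] pre that by simp_all
    then have "(pre (g x) - x) / d \<in> Rq"
      using ker by blast
    then show ?thesis
      by (simp add: \<Phi>_eq_iff diff_divide_distrib)
  qed
  have "quot_hom UNIV scale UNIV Rq \<Phi>"
    unfolding quot_hom_def
  proof (intro conjI ballI allI impI)
    show "\<exists>y\<in>UNIV. \<Phi> u = coset Rq y" for u
      unfolding \<Phi>_def by blast
  next
    fix u u' y y' assume "\<Phi> u = coset Rq y" "\<Phi> u' = coset Rq y'"
    then have "(pre u / d - y) + (pre u' / d - y') \<in> Rq"
      using qsub_add[OF qsub_Rq] by (simp add: \<Phi>_eq_iff)
    moreover have "\<Phi> (u + u') = coset Rq ((pre u + pre u') / d)"
      using \<Phi>_g[of "pre u + pre u'"] g_add qsub_add[OF J] pre by simp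
    ultimately show "\<Phi> (u + u') = coset Rq (y + y')"
      by (simp add: coset_eq_iff[OF qsub_Rq] add_divide_distrib algebra_simps)
  next
    fix c u y assume "\<Phi> u = coset Rq y"
    then have "emb c * (pre u / d - y) \<in> Rq"
      using qsub_scale[OF qsub_Rq] by (simp add: \<Phi>_eq_iff)
    moreover have "\<Phi> (scale c u) = coset Rq (emb c * pre u / d)"
      using \<Phi>_g[of "emb c * pre u"] g_scale qsub_scale[OF J] pre by simp
    ultimately show "\<Phi> (scale c u) = coset Rq (emb c * y)"
      by (simp add: coset_eq_iff[OF qsub_Rq] algebra_simps)
  qed
  moreover have "inj \<Phi>"
  proof (rule injI)
    fix u u' assume "\<Phi> u = \<Phi> u'"
    then have "(pre u - pre u') / d \<in> Rq"
      by (simp add: \<Phi>_def coset_eq_iff[OF qsub_Rq] diff_divide_distrib)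
    then have "g (pre u - pre u') = 0"
      using ker qsub_diff[OF J] pre by blast
    then show "u = u'"
      using g_diff pre by simp
  qed
  ultimately show ?thesis by blast
qed

lemma standard_imp_inj_quot_hom:
  fixes scale :: "'r::idom \<Rightarrow> 'm::ab_group_add \<Rightarrow> 'm"
  assumes m: "module scale" and v: "valuation_domain TYPE('r)" and std: "standard scale"
    and a: "a \<noteq> 0" and r: "r \<noteq> 0" and ann: "Ann scale a = principal r"
  shows "\<exists>\<Phi>. quot_hom UNIV scale UNIV Rq \<Phi> \<and> inj \<Phi>"
proof -
  obtain J A and g :: "'r fract \<Rightarrow> 'm" where J: "qsub J"
    and g_add: "\<forall>x\<in>J. \<forall>y\<in>J. g (x + y) = g x + g y"
    and g_scale: "\<forall>c. \<forall>x\<in>J. g (emb c * x) = scale c (g x)" and surj: "g ` J = UNIV"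
    using std unfolding standard_def by blast
  obtain q where q: "q \<in> J" "g q = a"
    using surj by (metis UNIV_I imageE)
  have "\<forall>x\<in>J. g x = 0 \<longleftrightarrow> x / (emb r * q) \<in> Rq"
    using fract_hom_kernel_principal[OF m v g_scale q(1)] q(2) a r ann by blast
  then show ?thesis
    by (rule inj_quot_hom_of_principal_kernel[OF m J g_add g_scale surj])
qed

lemma standard_imp_quot_hom_inj_on_cyc:
  fixes scale :: "'r::idom \<Rightarrow> 'm::ab_group_add \<Rightarrow> 'm"
  assumes m: "module scale" and v: "valuation_domain TYPE('r)" and std: "standard scale"
  shows "\<exists>\<Phi>. quot_hom UNIV scale UNIV Rq \<Phi> \<and>
    (\<forall>a r. r \<noteq> 0 \<longrightarrow> Ann scale a = principal r \<longrightarrow> inj_on \<Phi> (cyc scale a))"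
proof (cases "\<exists>a r. a \<noteq> 0 \<and> r \<noteq> 0 \<and> Ann scale a = principal r")
  case True
  then show ?thesis
    using standard_imp_inj_quot_hom[OF m v std] by (meson inj_on_subset subset_UNIV)
next
  case False
  have "quot_hom UNIV scale UNIV Rq (\<lambda>_. Rq)"
    using coset_eq_self_iff[OF qsub_Rq] qsub_add[OF qsub_Rq] qsub_scale[OF qsub_Rq]
    unfolding quot_hom_def by (metis UNIV_I emb_in_Rq emb_simps(5))
  moreover have "cyc scale a = {0}" if "r \<noteq> 0" "Ann scale a = principal r" for a r
  proof -
    have "a = 0"
      using False that by blast
    then show ?thesis
      unfolding cyc_def by (simp add: module.scale_zero_right[OF m])
  qed
  ultimately show ?thesis
    by (intro exI[of _ "\<lambda>_. Rq"]) auto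
qed

lemma omega1_uncountable: "\<not> countable (Field omega1)"
proof
  assume "countable (Field omega1)"
  then have "(card_of (Field omega1), natLeq) \<in> ordLeq"
    by (simp add: countable_card_le_natLeq)
  moreover have "(card_of (Field omega1), omega1) \<in> ordIso"
    by (simp add: card_of_Field_ordIso cardSuc_Card_order natLeq_Card_order)
  moreover have "(natLeq, omega1) \<in> ordLess"
    by (simp add: cardSuc_greater natLeq_Card_order)
  ultimately show False
    by (meson not_ordLess_ordLeq ordIso_ordLeq_trans ordIso_symmetric)
qed

lemma omega1_no_strict_mono_countable:
  fixes h :: "nat set \<Rightarrow> 'a::{linorder, countable}"
  assumes mono: "\<forall>\<sigma>\<in>Field omega1. \<forall>\<rho>\<in>Field omega1. (\<sigma>, \<rho>) \<in> omega1 \<and> \<sigma> \<noteq> \<rho> \<longrightarrow> h \<sigma> < h \<rho>"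
  shows False
proof -
  have total: "total_on (Field omega1) omega1"
    using cardSuc_Well_order[OF natLeq_Card_order]
    unfolding well_order_on_def linear_order_on_def by blast
  have "inj_on h (Field omega1)"
  proof (rule inj_onI, rule ccontr)
    fix \<sigma> \<rho> assume "\<sigma> \<in> Field omega1" "\<rho> \<in> Field omega1" "h \<sigma> = h \<rho>" "\<sigma> \<noteq> \<rho>"
    then show False
      using total mono unfolding total_on_def by (metis less_irrefl)
  qed
  then have "countable (Field omega1)"
    using countable_image_inj_on countableI_type by blast
  with omega1_uncountable show False ..
qed

theorem mainTheorem6:
  fixes scale :: "'r::idom \<Rightarrow> 'm::ab_group_add \<Rightarrow> 'm"
    and rs :: "nat set \<Rightarrow> 'r"
    and a :: "nat set \<Rightarrow> 'm"
  assumes "valuation_domain TYPE('r)"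
    and "(card_of (UNIV :: 'r set), omega1) \<in> ordIso"
    and "\<forall>\<sigma>\<in>Field omega1. rs \<sigma> \<noteq> 0"
    and "\<forall>\<sigma>\<in>Field omega1. \<forall>\<tau>\<in>Field omega1. (\<tau>, \<sigma>) \<in> omega1 \<and> \<tau> \<noteq> \<sigma> \<longrightarrow> rs \<tau> dvd rs \<sigma>"
    and "module scale"
    and "uniserial scale"
    and "has_type scale (\<Union>\<sigma>\<in>Field omega1. rinv (rs \<sigma>)) Rq"
    and "\<forall>\<sigma>\<in>Field omega1. Ann scale (a \<sigma>) = principal (rs \<sigma>)"
    and "\<exists>f. special_family scale rs a f"
  shows "\<not> standard scale"
proof
  note v = assms(1) and rs = assms(3,4) and m = assms(5) and u = assms(6) and ann = assms(8)
  assume "standard scale"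
  then obtain \<Phi> where hom: "quot_hom UNIV scale UNIV Rq \<Phi>"
    and inj: "\<forall>a r. r \<noteq> 0 \<longrightarrow> Ann scale a = principal r \<longrightarrow> inj_on \<Phi> (cyc scale a)"
    using standard_imp_quot_hom_inj_on_cyc[OF m v] by blast
  define \<phi> where "\<phi> \<sigma> = restrict \<Phi> (cyc scale (a \<sigma>))" for \<sigma>
  have iso: "\<phi> \<sigma> \<in> Iso_set scale (a \<sigma>) (rs \<sigma>)" if "\<sigma> \<in> Field omega1" for \<sigma>
    unfolding \<phi>_def
    using restrict_in_Iso_set[OF m v _ _ hom inj[rule_format]] rs(1) ann that by blast
  obtain f where f: "special_family scale rs a f"
    using assms(9) ..
  have "f \<sigma> (\<phi> \<sigma>) < f \<rho> (\<phi> \<rho>)"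
    if \<sigma>: "\<sigma> \<in> Field omega1" and \<rho>: "\<rho> \<in> Field omega1"
      and less: "(\<sigma>, \<rho>) \<in> omega1 \<and> \<sigma> \<noteq> \<rho>" for \<sigma> \<rho>
  proof -
    have "rs \<sigma> dvd rs \<rho>"
      using rs(2) \<sigma> \<rho> less by blast
    then have "cyc scale (a \<sigma>) \<subseteq> cyc scale (a \<rho>)"
      using uniserial_cyc_subset[OF m v u _ _ ann[rule_format, OF \<sigma>] ann[rule_format, OF \<rho>]]
        rs(1) \<sigma> by blast
    then have "\<forall>x\<in>cyc scale (a \<sigma>). \<phi> \<rho> x = \<phi> \<sigma> x"
      unfolding \<phi>_def by auto
    with f show ?thesis
      unfolding special_family_def using iso \<sigma> \<rho> less by blast
  qed
  then have "\<forall>\<sigma>\<in>Field omega1. \<forall>\<rho>\<in>Field omega1.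
      (\<sigma>, \<rho>) \<in> omega1 \<and> \<sigma> \<noteq> \<rho> \<longrightarrow> f \<sigma> (\<phi> \<sigma>) < f \<rho> (\<phi> \<rho>)"
    by blast
  then show False
    by (rule omega1_no_strict_mono_countable)
qed

end
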